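(* Let $A$ be a finite combinatorial annulus and $r$ a $b$-weakly bounded refinement. Then $\mathrm{EEL}(rA)\le b^2\,\mathrm{EEL}(A)$.
   Context: Graphs are simple, connected, locally finite. A combinatorial annulus is the 1-skeleton (with its triangular cell structure) of a triangulated topological annulus in the plane, i.e. a region whose boundary is two disjoint Jordan curves, one enclosing the other. An edge path is a sequence of edges $[v_0,v_1],[v_1,v_2],\dots$; $\mathrm{EEL}(A)$ is the extremal length of the family of edge paths connecting the two boundary components of $A$, using metrics on edges: a metric $m:E\to[0,\infty)$ has area $\sum_e m(e)^2$, the length of a path is the sum of $m$ over its edges, and $\mathrm{EEL}=\sup_m (\inf_\gamma L_m(\gamma))^2/\mathrm{area}(m)$ over metrics of finite non-zero area. Refinement: for planar complexes $G=(V,E,F)$ and $rG=(rV,rE,rF)$, $rG$ is a refinement of $G$ if $V\subset rV$ and each edge $e=[x,y]\in E$ corresponds to a path $x=w_0,w_1,\dots,w_n=y$ in $rG$ with $[w_j,w_{j+1}]\in rE$ and $w_j\notin V$ for $0<j<n$. Write $\mathrm{eInc}_r(e)=\{[w_0,w_1],\dots,[w_{n-1},w_n]\}$. $r$ is $b$-weakly bounded if $|\mathrm{eInc}_r(e)|\le b$ for all $e\in E$. *)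

theory Defs
  imports "HOL-Analysis.Analysis"
begin

text \<open>A planar complex is a triple (V, E, F): vertices are points of the plane,
  edges are point sets (images of arcs), faces are point sets (closed cells).\<close>

type_synonym planar_complex = "complex set \<times> complex set set \<times> complex set set"

definition verts :: "planar_complex \<Rightarrow> complex set" where
  "verts G = fst G"
definition edges :: "planar_complex \<Rightarrow> complex set set" where
  "edges G = fst (snd G)"
definition faces :: "planar_complex \<Rightarrow> complex set set" where
  "faces G = snd (snd G)"

definition jordan_curve :: "(real \<Rightarrow> complex) \<Rightarrow> bool" where
  "jordan_curve g \<longleftrightarrow> simple_path g \<and> pathfinish g = pathstart g"

definition is_edge_between :: "complex set \<Rightarrow> complex set \<Rightarrow> complex \<Rightarrow> complex \<Rightarrow> bool" where
  "is_edge_between V e x y \<longleftrightarrow>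
     (\<exists>g. arc g \<and> path_image g = e \<and> pathstart g = x \<and> pathfinish g = y) \<and> e \<inter> V = {x, y}"

definition triangulated_complex :: "planar_complex \<Rightarrow> bool" where
  "triangulated_complex G \<longleftrightarrow>
     (let V = verts G; E = edges G; F = faces G in
       (\<forall>e\<in>E. \<exists>x y. is_edge_between V e x y) \<and>
       (\<forall>e1\<in>E. \<forall>e2\<in>E. e1 \<noteq> e2 \<longrightarrow> e1 \<inter> e2 \<subseteq> V) \<and>
       (\<forall>e1\<in>E. \<forall>e2\<in>E. e1 \<inter> V = e2 \<inter> V \<longrightarrow> e1 = e2) \<and>
       (\<forall>v\<in>V. \<exists>e\<in>E. v \<in> e) \<and>
       (\<forall>f\<in>F. \<exists>x y z exy eyz ezx g.
           distinct [x, y, z] \<and> exy \<in> E \<and> eyz \<in> E \<and> ezx \<in> E \<and>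
           is_edge_between V exy x y \<and> is_edge_between V eyz y z \<and>
           is_edge_between V ezx z x \<and>
           jordan_curve g \<and> path_image g = exy \<union> eyz \<union> ezx \<and>
           f = path_image g \<union> inside (path_image g)) \<and>
       (\<forall>f1\<in>F. \<forall>f2\<in>F. f1 \<noteq> f2 \<longrightarrow> interior f1 \<inter> interior f2 = {}) \<and>
       (\<forall>e\<in>E. \<forall>f\<in>F. e \<inter> interior f = {}) \<and>
       (\<forall>e\<in>E. \<exists>f\<in>F. e \<subseteq> f))"

definition comb_annulus :: "planar_complex \<Rightarrow> bool" where
  "comb_annulus A \<longleftrightarrow>
     triangulated_complex A \<and>
     finite (verts A) \<and> finite (edges A) \<and> finite (faces A) \<and>
     (\<exists>c1 c2. jordan_curve c1 \<and> jordan_curve c2 \<and>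
        path_image c1 \<subseteq> inside (path_image c2) \<and>
        \<Union>(faces A) = (path_image c2 \<union> inside (path_image c2)) - inside (path_image c1))"

definition bdry_comps :: "planar_complex \<Rightarrow> complex set set" where
  "bdry_comps A = components (frontier (\<Union>(faces A)))"

definition edge_path :: "planar_complex \<Rightarrow> complex list \<Rightarrow> complex set list \<Rightarrow> bool" where
  "edge_path G vs es \<longleftrightarrow> length vs = Suc (length es) \<and>
     (\<forall>i<length es. es ! i \<in> edges G \<and> es ! i \<inter> verts G = {vs ! i, vs ! Suc i})"

definition connecting_paths :: "planar_complex \<Rightarrow> (complex list \<times> complex set list) set" where
  "connecting_paths A = {(vs, es). edge_path A vs es \<and>
     (\<exists>C1\<in>bdry_comps A. \<exists>C2\<in>bdry_comps A. C1 \<noteq> C2 \<and> hd vs \<in> C1 \<and> last vs \<in> C2)}"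

definition path_length :: "(complex set \<Rightarrow> real) \<Rightarrow> complex set list \<Rightarrow> real" where
  "path_length m es = sum_list (map m es)"

definition metric_area :: "planar_complex \<Rightarrow> (complex set \<Rightarrow> real) \<Rightarrow> real" where
  "metric_area G m = (\<Sum>e\<in>edges G. (m e)\<^sup>2)"

definition admissible_metric :: "planar_complex \<Rightarrow> (complex set \<Rightarrow> real) \<Rightarrow> bool" where
  "admissible_metric G m \<longleftrightarrow> (\<forall>e\<in>edges G. m e \<ge> 0) \<and> metric_area G m > 0"

definition min_length :: "planar_complex \<Rightarrow> (complex set \<Rightarrow> real) \<Rightarrow> real" where
  "min_length A m = Inf {path_length m es | vs es. (vs, es) \<in> connecting_paths A}"

definition EEL :: "planar_complex \<Rightarrow> real" where
  "EEL A = Sup {(min_length A m)\<^sup>2 / metric_area A m | m. admissible_metric A m}"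

definition refines_edge :: "planar_complex \<Rightarrow> planar_complex \<Rightarrow> complex set
      \<Rightarrow> complex list \<Rightarrow> complex set list \<Rightarrow> bool" where
  "refines_edge G rG e ws res \<longleftrightarrow>
     edge_path rG ws res \<and> res \<noteq> [] \<and>
     e \<inter> verts G = {hd ws, last ws} \<and>
     (\<forall>j. 0 < j \<and> j < length res \<longrightarrow> ws ! j \<notin> verts G) \<and>
     e = \<Union>(set res)"

definition refinement :: "planar_complex \<Rightarrow> planar_complex \<Rightarrow> bool" where
  "refinement G rG \<longleftrightarrow> verts G \<subseteq> verts rG \<and> \<Union>(faces rG) = \<Union>(faces G) \<and>
     (\<forall>e\<in>edges G. \<exists>ws res. refines_edge G rG e ws res)"

definition weakly_bounded :: "nat \<Rightarrow> planar_complex \<Rightarrow> planar_complex \<Rightarrow> bool" where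
  "weakly_bounded b G rG \<longleftrightarrow>
     (\<forall>e\<in>edges G. \<forall>ws res. refines_edge G rG e ws res \<longrightarrow> card (set res) \<le> b)"

end

theory Submission
  imports Defs
begin

text \<open>Push a metric \<open>m\<close> on \<open>rA\<close> down to \<open>A\<close> by giving each edge of \<open>A\<close> the \<open>m\<close>-length of the edge
  set of its refinement path. Every connecting edge path of \<open>A\<close> lifts to a connecting path of
  \<open>rA\<close> that is no longer, so the minimal length does not drop; the refinement paths of distinct
  edges are disjoint and have at most \<open>b\<close> edges, so by Cauchy--Schwarz the area grows at most by
  the factor \<open>b\<close>. Hence \<open>EEL rA \<le> b * EEL A \<le> b\<^sup>2 * EEL A\<close>. The topology enters only to show
  that \<open>A\<close> has a connecting path at all (otherwise \<open>EEL A\<close> is a junk value): each boundary curve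
  carries a vertex, and any two vertices are joined by an edge path because the annulus is
  connected.\<close>

section \<open>Walks\<close>

inductive walk :: "planar_complex \<Rightarrow> complex \<Rightarrow> complex set list \<Rightarrow> complex \<Rightarrow> bool" for G where
  walk_Nil: "walk G a [] a"
| walk_Cons: "e \<in> edges G \<Longrightarrow> e \<inter> verts G = {a, c} \<Longrightarrow> walk G c es b \<Longrightarrow> walk G a (e # es) b"

lemma walk_single: "e \<in> edges G \<Longrightarrow> e \<inter> verts G = {a, b} \<Longrightarrow> walk G a [e] b"
  by (rule walk_Cons[OF _ _ walk_Nil])

lemma walk_append: "walk G a xs c \<Longrightarrow> walk G c ys b \<Longrightarrow> walk G a (xs @ ys) b"
  by (induction rule: walk.induct) (auto intro: walk.intros)

lemma walk_rev: "walk G a es b \<Longrightarrow> walk G b (rev es) a"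
proof (induction rule: walk.induct)
  case (walk_Cons e a c es b)
  then show ?case
    by (auto intro!: walk_append walk_single simp: insert_commute)
qed (auto intro: walk.intros)

lemma walk_appendD:
  "walk G a (xs @ e # ys) b \<Longrightarrow>
     \<exists>d d'. walk G a xs d \<and> e \<in> edges G \<and> e \<inter> verts G = {d, d'} \<and> walk G d' ys b"
proof (induction xs arbitrary: a)
  case Nil
  then obtain c where "e \<in> edges G" "e \<inter> verts G = {a, c}" "walk G c ys b"
    by (auto elim: walk.cases)
  then show ?case by (auto intro: walk.intros)
next
  case (Cons x xs)
  from Cons.prems obtain c where "x \<in> edges G" "x \<inter> verts G = {a, c}" "walk G c (xs @ e # ys) b"
    by (auto elim: walk.cases)
  with Cons.IH show ?case by (meson walk.walk_Cons)
qed

lemma walk_distinct: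
  "walk G a es b \<Longrightarrow> \<exists>es'. walk G a es' b \<and> set es' \<subseteq> set es \<and> distinct es'"
proof (induction rule: walk.induct)
  case (walk_Cons e a c es b)
  then obtain es' where es': "walk G c es' b" "set es' \<subseteq> set es" "distinct es'" by blast
  show ?case
  proof (cases "e \<in> set es'")
    case False
    with es' walk_Cons.hyps show ?thesis by (auto intro!: exI[of _ "e # es'"] walk.intros)
  next
    case True
    then obtain xs ys where split: "es' = xs @ e # ys" by (meson split_list)
    with es'(1) obtain d d' where
      dd: "e \<inter> verts G = {d, d'}" "walk G d' ys b" by (blast dest: walk_appendD)
    have tail: "set ys \<subseteq> set (e # es)" "distinct ys" "e \<notin> set ys" using es' split by auto
    from dd(1) walk_Cons.hyps(2) have "a = d \<or> a = d'" by auto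
    then show ?thesis
    proof
      assume "a = d"
      with dd walk_Cons.hyps(1) have "walk G a (e # ys) b" by (auto intro: walk.intros)
      with tail show ?thesis by (intro exI[of _ "e # ys"]) auto
    next
      assume "a = d'"
      with dd tail show ?thesis by (intro exI[of _ ys]) auto
    qed
  qed
qed (auto intro: walk.intros)

lemma edge_path_Cons:
  "edge_path G (v # vs) (e # es) \<longleftrightarrow>
     e \<in> edges G \<and> e \<inter> verts G = {v, hd vs} \<and> edge_path G vs es"
  by (cases vs) (auto simp: edge_path_def All_less_Suc2 hd_conv_nth)

lemma walk_iff_edge_path:
  "walk G a es b \<longleftrightarrow> (\<exists>vs. edge_path G vs es \<and> hd vs = a \<and> last vs = b)"
proof
  show "walk G a es b \<Longrightarrow> \<exists>vs. edge_path G vs es \<and> hd vs = a \<and> last vs = b"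
  proof (induction rule: walk.induct)
    case (walk_Nil a)
    show ?case by (intro exI[of _ "[a]"]) (simp add: edge_path_def)
  next
    case (walk_Cons e a c es b)
    then obtain vs where vs: "edge_path G vs es" "hd vs = c" "last vs = b" by blast
    then have "vs \<noteq> []" by (auto simp: edge_path_def)
    with vs walk_Cons.hyps show ?case by (intro exI[of _ "a # vs"]) (simp add: edge_path_Cons)
  qed
next
  show "\<exists>vs. edge_path G vs es \<and> hd vs = a \<and> last vs = b \<Longrightarrow> walk G a es b"
  proof (induction es arbitrary: a)
    case Nil
    then show ?case by (auto simp: edge_path_def length_Suc_conv intro: walk.intros)
  next
    case (Cons e es)
    then obtain v vs where "edge_path G (v # vs) (e # es)" "v = a" "last (v # vs) = b"
      by (metis edge_path_def length_Suc_conv list.sel(1))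
    moreover from this have "vs \<noteq> []" by (auto simp: edge_path_def)
    ultimately show ?case using Cons.IH by (auto simp: edge_path_Cons intro: walk.intros)
  qed
qed

lemma edge_path_edges: "edge_path G vs es \<Longrightarrow> set es \<subseteq> edges G"
  by (auto simp: edge_path_def in_set_conv_nth)

lemma connecting_path_edges: "(vs, es) \<in> connecting_paths G \<Longrightarrow> set es \<subseteq> edges G"
  by (auto simp: connecting_paths_def dest: edge_path_edges)

lemma connecting_path_nonempty: "(vs, es) \<in> connecting_paths G \<Longrightarrow> es \<noteq> []"
proof
  assume "(vs, es) \<in> connecting_paths G" "es = []"
  then obtain C1 C2 where C: "C1 \<in> bdry_comps G" "C2 \<in> bdry_comps G" "C1 \<noteq> C2"
    and ends: "hd vs \<in> C1" "last vs \<in> C2" "length vs = Suc 0"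
    unfolding connecting_paths_def edge_path_def by auto
  from ends have "C1 \<inter> C2 \<noteq> {}" by (cases vs) auto
  with C show False by (simp add: bdry_comps_def components_eq)
qed

lemma edges_nonempty_if_connecting_paths: "connecting_paths G \<noteq> {} \<Longrightarrow> edges G \<noteq> {}"
  by (metis connecting_path_edges connecting_path_nonempty ex_in_conv set_empty2 subset_empty surj_pair)

section \<open>Edge extremal length\<close>

lemma path_length_nonneg:
  "set es \<subseteq> edges G \<Longrightarrow> \<forall>e\<in>edges G. 0 \<le> m e \<Longrightarrow> 0 \<le> path_length m es"
  unfolding path_length_def by (force intro!: sum_list_nonneg)

lemma path_length_le_sqrt_area:
  assumes "set es \<subseteq> edges G" "finite (edges G)" "\<forall>e\<in>edges G. 0 \<le> m e"
  shows "path_length m es \<le> real (length es) * sqrt (metric_area G m)"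
proof -
  have "m e \<le> sqrt (metric_area G m)" if "e \<in> set es" for e
  proof -
    have "(m e)\<^sup>2 \<le> metric_area G m"
      unfolding metric_area_def
      by (rule member_le_sum[where f = "\<lambda>e. (m e)\<^sup>2"]) (use that assms in auto)
    then show ?thesis by (rule real_le_rsqrt)
  qed
  then have "sum_list (map m es) \<le> sum_list (map (\<lambda>_. sqrt (metric_area G m)) es)"
    by (intro sum_list_mono)
  then show ?thesis by (simp add: path_length_def sum_list_triv)
qed

lemma min_length_le:
  assumes "(vs, es) \<in> connecting_paths G" "\<forall>e\<in>edges G. 0 \<le> m e"
  shows "min_length G m \<le> path_length m es"
  unfolding min_length_def
proof (rule cInf_lower)
  show "bdd_below {path_length m es |vs es. (vs, es) \<in> connecting_paths G}"
    using assms(2) by (auto intro!: bdd_belowI[of _ 0] path_length_nonneg dest: connecting_path_edges)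
qed (use assms(1) in blast)

lemma min_length_nonneg:
  assumes "connecting_paths G \<noteq> {}" "\<forall>e\<in>edges G. 0 \<le> m e"
  shows "0 \<le> min_length G m"
  unfolding min_length_def
  using assms by (intro cInf_greatest) (auto intro!: path_length_nonneg dest: connecting_path_edges)

lemma min_length_le_by_path_map:
  assumes "connecting_paths G \<noteq> {}" "\<forall>e\<in>edges H. 0 \<le> m e"
    and "\<And>vs es. (vs, es) \<in> connecting_paths G \<Longrightarrow>
           \<exists>vs' es'. (vs', es') \<in> connecting_paths H \<and> path_length m es' \<le> path_length M es"
  shows "min_length H m \<le> min_length G M"
  unfolding min_length_def[of G]
proof (rule cInf_greatest)
  fix y assume "y \<in> {path_length M es |vs es. (vs, es) \<in> connecting_paths G}"
  then obtain vs es where "y = path_length M es" "(vs, es) \<in> connecting_paths G" by blast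
  with assms(3) obtain vs' es' where "(vs', es') \<in> connecting_paths H" "path_length m es' \<le> y"
    by blast
  with assms(2) show "min_length H m \<le> y" by (meson min_length_le order_trans)
qed (use assms(1) in auto)

lemma admissible_metric_one: "finite (edges G) \<Longrightarrow> edges G \<noteq> {} \<Longrightarrow> admissible_metric G (\<lambda>_. 1)"
  by (simp add: admissible_metric_def metric_area_def card_gt_0_iff)

lemma EEL_ratios_bdd_above:
  assumes "finite (edges G)" "connecting_paths G \<noteq> {}"
  shows "bdd_above {(min_length G m)\<^sup>2 / metric_area G m | m. admissible_metric G m}"
proof -
  obtain vs es where cp: "(vs, es) \<in> connecting_paths G" using assms(2) by auto
  let ?L = "real (length es)"
  show ?thesis
  proof (rule bdd_aboveI[of _ "?L\<^sup>2"])
    fix x assume "x \<in> {(min_length G m)\<^sup>2 / metric_area G m | m. admissible_metric G m}"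
    then obtain m where x: "x = (min_length G m)\<^sup>2 / metric_area G m"
      and m: "\<forall>e\<in>edges G. 0 \<le> m e" and area: "metric_area G m > 0"
      by (auto simp: admissible_metric_def)
    have "min_length G m \<le> ?L * sqrt (metric_area G m)"
      using min_length_le[OF cp m] path_length_le_sqrt_area[OF connecting_path_edges[OF cp] assms(1) m]
      by linarith
    then have "(min_length G m)\<^sup>2 \<le> (?L * sqrt (metric_area G m))\<^sup>2"
      using min_length_nonneg[OF assms(2) m] by (rule power_mono)
    also have "\<dots> = ?L\<^sup>2 * metric_area G m" using area by (simp add: power_mult_distrib)
    finally show "x \<le> ?L\<^sup>2" using area by (simp add: x pos_divide_le_eq)
  qed
qed

lemma EEL_ge_ratio:
  assumes "finite (edges G)" "connecting_paths G \<noteq> {}" "admissible_metric G m"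
  shows "(min_length G m)\<^sup>2 / metric_area G m \<le> EEL G"
  unfolding EEL_def using assms by (intro cSup_upper EEL_ratios_bdd_above) auto

lemma EEL_nonneg:
  assumes "finite (edges G)" "connecting_paths G \<noteq> {}"
  shows "0 \<le> EEL G"
proof -
  have "0 \<le> (min_length G (\<lambda>_. 1))\<^sup>2 / metric_area G (\<lambda>_. 1)"
    by (simp add: metric_area_def)
  also have "\<dots> \<le> EEL G"
    using assms by (intro EEL_ge_ratio admissible_metric_one edges_nonempty_if_connecting_paths)
  finally show ?thesis .
qed

lemma EEL_le:
  assumes "finite (edges G)" "edges G \<noteq> {}"
    and "\<And>m. admissible_metric G m \<Longrightarrow> (min_length G m)\<^sup>2 / metric_area G m \<le> c"
  shows "EEL G \<le> c"
  unfolding EEL_def using assms admissible_metric_one[OF assms(1,2)] by (intro cSup_least) auto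

lemma EEL_le_scaled:
  assumes fin: "finite (edges G)" "finite (edges H)"
    and cp: "connecting_paths G \<noteq> {}" "connecting_paths H \<noteq> {}" and "0 \<le> c"
    and push: "\<And>m. admissible_metric H m \<Longrightarrow> \<exists>M. (\<forall>e\<in>edges G. 0 \<le> M e) \<and>
                  metric_area G M \<le> c * metric_area H m \<and> min_length H m \<le> min_length G M"
  shows "EEL H \<le> c * EEL G"
proof (rule EEL_le[OF fin(2) edges_nonempty_if_connecting_paths[OF cp(2)]])
  fix m assume adm: "admissible_metric H m"
  then have m: "\<forall>e\<in>edges H. 0 \<le> m e" and area: "metric_area H m > 0"
    by (auto simp: admissible_metric_def)
  obtain M where M: "\<forall>e\<in>edges G. 0 \<le> M e" and areaM: "metric_area G M \<le> c * metric_area H m"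
    and len: "min_length H m \<le> min_length G M" using push[OF adm] by blast
  have len0: "0 \<le> min_length H m" by (rule min_length_nonneg[OF cp(2) m])
  have EEL0: "0 \<le> EEL G" by (rule EEL_nonneg[OF fin(1) cp(1)])
  show "(min_length H m)\<^sup>2 / metric_area H m \<le> c * EEL G"
  proof (cases "metric_area G M = 0")
    case True
    obtain vs es where p: "(vs, es) \<in> connecting_paths G" using cp(1) by auto
    have "min_length G M \<le> 0"
      using min_length_le[OF p M] path_length_le_sqrt_area[OF connecting_path_edges[OF p] fin(1) M] True
      by simp
    with len len0 have "min_length H m = 0" by simp
    with EEL0 \<open>0 \<le> c\<close> show ?thesis by simp
  next
    case False
    then have areaM0: "metric_area G M > 0"
      using M by (simp add: metric_area_def order_less_le sum_nonneg)
    with M have admM: "admissible_metric G M" by (simp add: admissible_metric_def)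
    have "(min_length H m)\<^sup>2 / metric_area H m \<le> (min_length G M)\<^sup>2 / metric_area H m"
      using len len0 area by (intro divide_right_mono power_mono) auto
    also have "\<dots> \<le> c * ((min_length G M)\<^sup>2 / metric_area G M)"
    proof -
      have "metric_area G M * (min_length G M)\<^sup>2 \<le> (c * metric_area H m) * (min_length G M)\<^sup>2"
        using areaM by (rule mult_right_mono) simp
      then show ?thesis using area areaM0 by (simp add: field_simps)
    qed
    also have "\<dots> \<le> c * EEL G"
      using EEL_ge_ratio[OF fin(1) cp(1) admM] \<open>0 \<le> c\<close> by (rule mult_left_mono)
    finally show ?thesis .
  qed
qed

section \<open>Triangulated complexes\<close>

lemma arc_image_infinite: "arc g \<Longrightarrow> infinite (path_image g)"
  unfolding arc_def path_image_def by (simp add: finite_image_iff)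

context
  fixes G :: planar_complex
  assumes tri: "triangulated_complex G"
begin

lemma edge_between: "e \<in> edges G \<Longrightarrow> \<exists>x y. is_edge_between (verts G) e x y"
  using tri by (simp add: triangulated_complex_def Let_def)

lemma edge_is_arc: "e \<in> edges G \<Longrightarrow> \<exists>g x y. arc g \<and> path_image g = e \<and> e \<inter> verts G = {x, y}"
  using edge_between unfolding is_edge_between_def by blast

lemma edges_meet_in_verts: "e1 \<in> edges G \<Longrightarrow> e2 \<in> edges G \<Longrightarrow> e1 \<noteq> e2 \<Longrightarrow> e1 \<inter> e2 \<subseteq> verts G"
  using tri by (simp add: triangulated_complex_def Let_def)

lemma vertex_on_edge: "v \<in> verts G \<Longrightarrow> \<exists>e\<in>edges G. v \<in> e"
  using tri by (simp add: triangulated_complex_def Let_def)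

lemma edge_in_face: "e \<in> edges G \<Longrightarrow> \<exists>f\<in>faces G. e \<subseteq> f"
  using tri by (simp add: triangulated_complex_def Let_def)

lemma face_interiors_disjoint:
  "f1 \<in> faces G \<Longrightarrow> f2 \<in> faces G \<Longrightarrow> f1 \<noteq> f2 \<Longrightarrow> interior f1 \<inter> interior f2 = {}"
  using tri by (simp add: triangulated_complex_def Let_def)

lemma edge_misses_face_interior: "e \<in> edges G \<Longrightarrow> f \<in> faces G \<Longrightarrow> e \<inter> interior f = {}"
  using tri by (simp add: triangulated_complex_def Let_def)

lemma edge_closed: "e \<in> edges G \<Longrightarrow> closed e"
  by (auto dest!: edge_is_arc intro: compact_imp_closed compact_arc_image)

lemma edge_infinite: "e \<in> edges G \<Longrightarrow> infinite e"
  by (auto dest!: edge_is_arc dest: arc_image_infinite)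

lemma edge_has_vertex: "e \<in> edges G \<Longrightarrow> e \<inter> verts G \<noteq> {}"
  using edge_is_arc by blast

lemma face_triangle:
  assumes "f \<in> faces G"
  obtains x y z exy eyz ezx where
    "exy \<in> edges G" "eyz \<in> edges G" "ezx \<in> edges G"
    "exy \<inter> verts G = {x, y}" "eyz \<inter> verts G = {y, z}" "ezx \<inter> verts G = {z, x}"
    "f = exy \<union> eyz \<union> ezx \<union> inside (exy \<union> eyz \<union> ezx)"
    "open (inside (exy \<union> eyz \<union> ezx))" "closed f"
proof -
  have triangles: "\<forall>f\<in>faces G. \<exists>x y z exy eyz ezx g.
           distinct [x, y, z] \<and> exy \<in> edges G \<and> eyz \<in> edges G \<and> ezx \<in> edges G \<and>
           is_edge_between (verts G) exy x y \<and> is_edge_between (verts G) eyz y z \<and>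
           is_edge_between (verts G) ezx z x \<and>
           jordan_curve g \<and> path_image g = exy \<union> eyz \<union> ezx \<and>
           f = path_image g \<union> inside (path_image g)"
    using tri unfolding triangulated_complex_def Let_def by (elim conjE) assumption
  obtain x y z exy eyz ezx g where e: "exy \<in> edges G" "eyz \<in> edges G" "ezx \<in> edges G"
    "is_edge_between (verts G) exy x y" "is_edge_between (verts G) eyz y z"
    "is_edge_between (verts G) ezx z x"
    and g: "path_image g = exy \<union> eyz \<union> ezx" and f: "f = path_image g \<union> inside (path_image g)"
    using bspec[OF triangles assms] by (elim exE conjE) blast
  let ?T = "exy \<union> eyz \<union> ezx"
  have T: "closed ?T" using e(1-3) by (intro closed_Un edge_closed)
  have v: "exy \<inter> verts G = {x, y}" "eyz \<inter> verts G = {y, z}" "ezx \<inter> verts G = {z, x}"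
    using e(4-6) by (simp_all add: is_edge_between_def)
  have fT: "f = ?T \<union> inside ?T" using f g by simp
  have "closed f" using T by (simp add: fT union_with_inside open_outside closed_Compl)
  from e(1-3) v fT open_inside[OF T] this show ?thesis by (rule that)
qed

lemma face_closed: "f \<in> faces G \<Longrightarrow> closed f"
  by (rule face_triangle)

lemma face_point_cases:
  assumes "f \<in> faces G" "p \<in> f"
  shows "p \<in> interior f \<or> (\<exists>e\<in>edges G. p \<in> e \<and> e \<subseteq> f)"
proof -
  obtain x y z exy eyz ezx where e: "exy \<in> edges G" "eyz \<in> edges G" "ezx \<in> edges G"
    and "exy \<inter> verts G = {x, y}" "eyz \<inter> verts G = {y, z}" "ezx \<inter> verts G = {z, x}"
    and f: "f = exy \<union> eyz \<union> ezx \<union> inside (exy \<union> eyz \<union> ezx)"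
    and op: "open (inside (exy \<union> eyz \<union> ezx))" and "closed f"
    by (rule face_triangle[OF assms(1)])
  have "inside (exy \<union> eyz \<union> ezx) \<subseteq> interior f" using op f by (intro interior_maximal) auto
  with assms(2) e f show ?thesis by blast
qed

text \<open>Vertices lie on edges, which avoid the open inside of a face, so every vertex of a face is a
  corner of its triangle.\<close>
lemma face_vertices_linked:
  assumes "f \<in> faces G" "r \<in> f \<inter> verts G" "r' \<in> f \<inter> verts G"
  shows "\<exists>es. walk G r es r'"
proof -
  obtain x y z exy eyz ezx where e: "exy \<in> edges G" "eyz \<in> edges G" "ezx \<in> edges G"
    and v: "exy \<inter> verts G = {x, y}" "eyz \<inter> verts G = {y, z}" "ezx \<inter> verts G = {z, x}"
    and f: "f = exy \<union> eyz \<union> ezx \<union> inside (exy \<union> eyz \<union> ezx)"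
    and op: "open (inside (exy \<union> eyz \<union> ezx))" and "closed f"
    by (rule face_triangle[OF assms(1)])
  have ins: "inside (exy \<union> eyz \<union> ezx) \<subseteq> interior f" using op f by (intro interior_maximal) auto
  have corners: "f \<inter> verts G \<subseteq> {x, y, z}"
  proof
    fix v assume v': "v \<in> f \<inter> verts G"
    then obtain e where "e \<in> edges G" "v \<in> e" using vertex_on_edge by blast
    then have "v \<notin> inside (exy \<union> eyz \<union> ezx)"
      using edge_misses_face_interior[OF _ assms(1)] ins by blast
    with v' f v show "v \<in> {x, y, z}" by blast
  qed
  have "walk G x [exy] y" "walk G y [exy] x" "walk G y [eyz] z" "walk G z [eyz] y"
       "walk G z [ezx] x" "walk G x [ezx] z" "walk G x [] x" "walk G y [] y" "walk G z [] z"
    using e v by (simp_all add: walk_single walk_Nil insert_commute)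
  with assms(2,3) corners show ?thesis by blast
qed

text \<open>A common point of two faces lies in neither interior (an edge of one face would otherwise
  enter the interior of the other), hence on an edge of each; two distinct edges meet only in
  vertices.\<close>
lemma faces_meet_in_vertex:
  assumes f: "f1 \<in> faces G" "f2 \<in> faces G" "f1 \<noteq> f2" and p: "p \<in> f1" "p \<in> f2"
  shows "f1 \<inter> f2 \<inter> verts G \<noteq> {}"
proof -
  have not_interior: "p \<notin> interior g1"
    if g: "g1 \<in> faces G" "g2 \<in> faces G" "g1 \<noteq> g2" "p \<in> g2" for g1 g2
  proof
    assume p1: "p \<in> interior g1"
    then have "p \<notin> interior g2" using face_interiors_disjoint[OF g(1-3)] by blast
    then obtain e where "e \<in> edges G" "p \<in> e" using face_point_cases[OF g(2,4)] by blast
    with p1 show False using edge_misses_face_interior[OF _ g(1)] by blast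
  qed
  obtain e1 where e1: "e1 \<in> edges G" "p \<in> e1" "e1 \<subseteq> f1"
    using face_point_cases[OF f(1) p(1)] not_interior[OF f(1,2,3) p(2)] by blast
  obtain e2 where e2: "e2 \<in> edges G" "p \<in> e2" "e2 \<subseteq> f2"
    using face_point_cases[OF f(2) p(2)] not_interior[OF f(2,1) f(3)[symmetric] p(1)] by blast
  show ?thesis
  proof (cases "e1 = e2")
    case True
    with e1 e2 edge_has_vertex[OF e1(1)] show ?thesis by blast
  next
    case False
    with e1 e2 edges_meet_in_verts p show ?thesis by blast
  qed
qed

lemma region_closed: "finite (faces G) \<Longrightarrow> closed (\<Union>(faces G))"
  by (auto intro: closed_Union face_closed)

lemma noninterior_point_on_edge:
  assumes "p \<in> \<Union>(faces G)" "p \<notin> interior (\<Union>(faces G))"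
  shows "\<exists>e\<in>edges G. p \<in> e"
proof -
  obtain f where f: "f \<in> faces G" "p \<in> f" using assms(1) by blast
  have "interior f \<subseteq> interior (\<Union>(faces G))" using f(1) by (intro interior_mono) blast
  with f assms(2) show ?thesis using face_point_cases by blast
qed

text \<open>The faces containing a vertex reachable from \<open>u\<close> and the remaining faces form two disjoint
  closed sets covering the region, so by connectedness every face is of the first kind.\<close>
lemma walk_between_vertices:
  assumes fin: "finite (faces G)" and conn: "connected (\<Union>(faces G))"
    and uw: "u \<in> verts G" "w \<in> verts G"
  shows "\<exists>es. walk G u es w"
proof -
  define Reach where "Reach = {v \<in> verts G. \<exists>es. walk G u es v}"
  have reach_face: "f \<inter> verts G \<subseteq> Reach" if f: "f \<in> faces G" "f \<inter> Reach \<noteq> {}" for f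
  proof
    fix r' assume r': "r' \<in> f \<inter> verts G"
    obtain r es where "r \<in> f \<inter> verts G" "walk G u es r" using f(2) unfolding Reach_def by blast
    moreover from this obtain es' where "walk G r es' r'" using face_vertices_linked[OF f(1) _ r'] by blast
    ultimately show "r' \<in> Reach" using r' walk_append unfolding Reach_def by blast
  qed
  have on_face: "\<exists>f\<in>faces G. v \<in> f" if "v \<in> verts G" for v
    using vertex_on_edge[OF that] edge_in_face by blast
  define X where "X = \<Union>{f \<in> faces G. f \<inter> Reach \<noteq> {}}"
  define Y where "Y = \<Union>{f \<in> faces G. f \<inter> Reach = {}}"
  have closed: "closed X" "closed Y"
    unfolding X_def Y_def using fin face_closed by (auto intro!: closed_Union)
  have "X \<inter> Y = {}"
  proof (rule ccontr)
    assume "X \<inter> Y \<noteq> {}"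
    then obtain f1 f2 p where f1: "f1 \<in> faces G" "f1 \<inter> Reach \<noteq> {}"
      and f2: "f2 \<in> faces G" "f2 \<inter> Reach = {}" and p: "p \<in> f1" "p \<in> f2"
      unfolding X_def Y_def by blast
    then have "f1 \<noteq> f2" by blast
    with f1 f2 p have "f1 \<inter> f2 \<inter> verts G \<noteq> {}" by (intro faces_meet_in_vertex)
    with reach_face[OF f1] f2(2) show False by blast
  qed
  moreover obtain fu where "fu \<in> faces G" "u \<in> fu" using on_face[OF uw(1)] by blast
  then have "u \<in> X" "u \<in> \<Union>(faces G)"
    using uw(1) unfolding X_def Reach_def by (blast intro: walk_Nil)+
  moreover have "\<Union>(faces G) \<subseteq> X \<union> Y" unfolding X_def Y_def by blast
  ultimately have "Y \<inter> \<Union>(faces G) = {}"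
    using conn closed unfolding connected_closed by blast
  moreover have "Y \<subseteq> \<Union>(faces G)" unfolding Y_def by blast
  ultimately have "Y = {}" by blast
  obtain f where f: "f \<in> faces G" "w \<in> f" using on_face[OF uw(2)] by blast
  have "f \<inter> Reach \<noteq> {}"
  proof
    assume "f \<inter> Reach = {}"
    then have "f \<subseteq> Y" using f(1) unfolding Y_def by blast
    with \<open>Y = {}\<close> f(2) show False by blast
  qed
  then have "w \<in> Reach" using reach_face[OF f(1)] f(2) uw(2) by blast
  then show ?thesis unfolding Reach_def by blast
qed

end

section \<open>Refinements\<close>

lemma refines_edge_edges: "refines_edge G rG e ws res \<Longrightarrow> set res \<subseteq> edges rG"
  by (auto simp: refines_edge_def dest: edge_path_edges)

lemma refines_edge_walk:
  assumes "refines_edge G rG e ws res" "e \<inter> verts G = {a, c}"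
  shows "\<exists>r. walk rG a r c \<and> set r \<subseteq> set res \<and> distinct r"
proof -
  from assms(1) have "walk rG (hd ws) res (last ws)" and ends: "e \<inter> verts G = {hd ws, last ws}"
    by (auto simp: refines_edge_def walk_iff_edge_path)
  then obtain r where r: "walk rG (hd ws) r (last ws)" "set r \<subseteq> set res" "distinct r"
    using walk_distinct by blast
  from ends assms(2) have "(a = hd ws \<and> c = last ws) \<or> (a = last ws \<and> c = hd ws)"
    by (auto simp: doubleton_eq_iff)
  with r walk_rev[OF r(1)] show ?thesis by (metis distinct_rev set_rev)
qed

text \<open>The refinement path of an edge of \<open>G\<close> may repeat edges, so it is shortened to a path with
  distinct edges, whose length is then bounded by the sum over its edge set.\<close>
lemma refinement_lift_walk:
  assumes R: "\<forall>e\<in>edges G. refines_edge G rG e (W e) (Rs e)" and m: "\<forall>e\<in>edges rG. 0 \<le> m e"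
    and "walk G a es b"
  shows "\<exists>es'. walk rG a es' b \<and> path_length m es' \<le> path_length (\<lambda>e. sum m (set (Rs e))) es"
  using \<open>walk G a es b\<close>
proof (induction rule: walk.induct)
  case (walk_Nil a)
  show ?case by (auto simp: path_length_def intro: walk.intros)
next
  case (walk_Cons e a c es b)
  then obtain es' where es': "walk rG c es' b"
    "path_length m es' \<le> path_length (\<lambda>e. sum m (set (Rs e))) es" by blast
  have re: "refines_edge G rG e (W e) (Rs e)" using R walk_Cons.hyps(1) by blast
  obtain r where r: "walk rG a r c" "set r \<subseteq> set (Rs e)" "distinct r"
    using refines_edge_walk[OF re walk_Cons.hyps(2)] by blast
  have "path_length m r = sum m (set r)"
    by (simp add: path_length_def sum_list_distinct_conv_sum_set r(3))
  also have "\<dots> \<le> sum m (set (Rs e))"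
    using r(2) refines_edge_edges[OF re] m by (intro sum_mono2) auto
  finally have "path_length m (r @ es') \<le> path_length (\<lambda>e. sum m (set (Rs e))) (e # es)"
    using es'(2) by (simp add: path_length_def)
  with walk_append[OF r(1) es'(1)] show ?case by blast
qed

lemma refinement_lift_connecting_path:
  assumes "refinement G rG" "\<forall>e\<in>edges G. refines_edge G rG e (W e) (Rs e)"
    and "\<forall>e\<in>edges rG. 0 \<le> m e" and "(vs, es) \<in> connecting_paths G"
  shows "\<exists>vs' es'. (vs', es') \<in> connecting_paths rG \<and>
           path_length m es' \<le> path_length (\<lambda>e. sum m (set (Rs e))) es"
proof -
  have comps: "bdry_comps rG = bdry_comps G"
    using assms(1) by (simp add: bdry_comps_def refinement_def)
  from assms(4) have "walk G (hd vs) es (last vs)"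
    by (auto simp: connecting_paths_def walk_iff_edge_path)
  then obtain es' where "walk rG (hd vs) es' (last vs)"
    and len: "path_length m es' \<le> path_length (\<lambda>e. sum m (set (Rs e))) es"
    using refinement_lift_walk[OF assms(2,3)] by blast
  then obtain vs' where "edge_path rG vs' es'" "hd vs' = hd vs" "last vs' = last vs"
    by (auto simp: walk_iff_edge_path)
  with assms(4) comps len show ?thesis unfolding connecting_paths_def by fastforce
qed

text \<open>Distinct edges of \<open>G\<close> share only vertices of \<open>G\<close>, which are vertices of \<open>rG\<close>, whereas an
  edge of \<open>rG\<close> is an infinite set meeting the vertices of \<open>rG\<close> in two points.\<close>
lemma refinement_paths_disjoint:
  assumes tri: "triangulated_complex G" "triangulated_complex rG" and "verts G \<subseteq> verts rG"
    and e: "e1 \<in> edges G" "e2 \<in> edges G" "e1 \<noteq> e2"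
    and r: "refines_edge G rG e1 ws1 res1" "refines_edge G rG e2 ws2 res2"
  shows "set res1 \<inter> set res2 = {}"
proof (rule ccontr)
  assume "set res1 \<inter> set res2 \<noteq> {}"
  then obtain x where x: "x \<in> set res1" "x \<in> set res2" by blast
  then have "x \<subseteq> e1 \<inter> e2" using r by (auto simp: refines_edge_def)
  then have "x \<subseteq> verts rG" using edges_meet_in_verts[OF tri(1) e] assms(3) by blast
  moreover have "x \<in> edges rG" using refines_edge_edges[OF r(1)] x(1) by blast
  ultimately show False
    using edge_is_arc[OF tri(2)] edge_infinite[OF tri(2)]
    by (metis Int_absorb2 finite.emptyI finite_insert)
qed

lemma sum_squares_Union_le:
  fixes m :: "'b \<Rightarrow> real"
  assumes "finite E" "finite E'" "\<forall>e\<in>E. S e \<subseteq> E'" "\<forall>e\<in>E. card (S e) \<le> b"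
    and "disjoint_family_on S E"
  shows "(\<Sum>e\<in>E. (sum m (S e))\<^sup>2) \<le> real b * (\<Sum>x\<in>E'. (m x)\<^sup>2)"
proof -
  have finS: "\<forall>e\<in>E. finite (S e)" using assms(2,3) finite_subset by blast
  have "(\<Sum>e\<in>E. (sum m (S e))\<^sup>2) \<le> (\<Sum>e\<in>E. real b * (\<Sum>x\<in>S e. (m x)\<^sup>2))"
  proof (rule sum_mono)
    fix e assume e: "e \<in> E"
    have "(sum m (S e))\<^sup>2 \<le> (\<Sum>x\<in>S e. (m x)\<^sup>2) * card (S e)"
      by (rule sum_squared_le_sum_of_squares)
    also have "\<dots> \<le> (\<Sum>x\<in>S e. (m x)\<^sup>2) * real b"
      using assms(4) e by (intro mult_left_mono) (auto intro: sum_nonneg)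
    finally show "(sum m (S e))\<^sup>2 \<le> real b * (\<Sum>x\<in>S e. (m x)\<^sup>2)" by (simp add: mult.commute)
  qed
  also have "\<dots> = real b * (\<Sum>x\<in>\<Union>(S ` E). (m x)\<^sup>2)"
    using assms(1,5) finS by (simp add: sum_distrib_left sum.UNION_disjoint_family)
  also have "\<dots> \<le> real b * (\<Sum>x\<in>E'. (m x)\<^sup>2)"
    using assms(2,3) by (intro mult_left_mono sum_mono2) auto
  finally show ?thesis .
qed

lemma EEL_refinement_le:
  assumes tri: "triangulated_complex G" "triangulated_complex rG"
    and fin: "finite (edges G)" "finite (edges rG)" and cp: "connecting_paths G \<noteq> {}"
    and ref: "refinement G rG" and bnd: "weakly_bounded b G rG"
  shows "EEL rG \<le> real b * EEL G"
proof -
  obtain W Rs where R: "\<forall>e\<in>edges G. refines_edge G rG e (W e) (Rs e)"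
    using ref unfolding refinement_def by metis
  have lift: "\<And>m vs es. \<forall>e\<in>edges rG. 0 \<le> m e \<Longrightarrow> (vs, es) \<in> connecting_paths G \<Longrightarrow>
      \<exists>vs' es'. (vs', es') \<in> connecting_paths rG \<and>
        path_length m es' \<le> path_length (\<lambda>e. sum m (set (Rs e))) es"
    using refinement_lift_connecting_path[OF ref R] by blast
  have cpR: "connecting_paths rG \<noteq> {}"
    using cp lift[of "\<lambda>_. 1"] by fastforce
  show ?thesis
  proof (rule EEL_le_scaled[OF fin cp cpR])
    fix m assume "admissible_metric rG m"
    then have m: "\<forall>e\<in>edges rG. 0 \<le> m e" by (simp add: admissible_metric_def)
    define M where "M e = sum m (set (Rs e))" for e
    have "\<forall>e\<in>edges G. 0 \<le> M e"
      using R m by (auto simp: M_def dest!: refines_edge_edges intro!: sum_nonneg)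
    moreover have "metric_area G M \<le> real b * metric_area rG m"
      unfolding metric_area_def M_def
    proof (rule sum_squares_Union_le[OF fin])
      show "\<forall>e\<in>edges G. set (Rs e) \<subseteq> edges rG" using R refines_edge_edges by blast
      show "\<forall>e\<in>edges G. card (set (Rs e)) \<le> b" using R bnd by (auto simp: weakly_bounded_def)
      show "disjoint_family_on (\<lambda>e. set (Rs e)) (edges G)"
        using R refinement_paths_disjoint[OF tri] ref
        unfolding disjoint_family_on_def refinement_def by blast
    qed
    moreover have "min_length rG m \<le> min_length G M"
      using min_length_le_by_path_map[OF cp m] lift[OF m] unfolding M_def by blast
    ultimately show "\<exists>M. (\<forall>e\<in>edges G. 0 \<le> M e) \<and> metric_area G M \<le> real b * metric_area rG m \<and>
        min_length rG m \<le> min_length G M" by blast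
  qed simp
qed

section \<open>Jordan curves and the annulus\<close>

lemma connected_unbounded_subset_outside:
  fixes S T :: "'a::real_normed_vector set"
  assumes "connected T" "\<not> bounded T" "T \<inter> S = {}"
  shows "T \<subseteq> outside S"
proof
  fix x assume x: "x \<in> T"
  have "T \<subseteq> connected_component_set (- S) x"
    by (rule connected_component_maximal) (use assms x in auto)
  then have "\<not> bounded (connected_component_set (- S) x)" using assms(2) bounded_subset by blast
  then show "x \<in> outside S" by (simp add: outside)
qed

lemma inside_subset_inside_jordan:
  assumes "jordan_curve c" "S \<subseteq> inside (path_image c)"
  shows "inside S \<subseteq> inside (path_image c)"
proof -
  let ?P = "path_image c"
  have "simple_path c" "pathfinish c = pathstart c" using assms(1) by (auto simp: jordan_curve_def)
  note J = Jordan_inside_outside[OF this]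
  have "closure (outside ?P) = ?P \<union> outside ?P" using J by (simp add: closure_Un_frontier sup_commute)
  then have "connected (?P \<union> outside ?P)" using connected_imp_connected_closure J by metis
  moreover have "\<not> bounded (?P \<union> outside ?P)" using J bounded_subset by blast
  moreover have "(?P \<union> outside ?P) \<inter> S = {}"
    using assms(2) inside_Int_outside[of ?P] inside_no_overlap[of ?P] by blast
  ultimately have "?P \<union> outside ?P \<subseteq> outside S" by (rule connected_unbounded_subset_outside)
  then show ?thesis using inside_Int_outside[of S] inside_Un_outside[of ?P] by blast
qed

text \<open>The region between two nested Jordan curves is the intersection of the closures
  \<open>- outside P2\<close> and \<open>- inside P1\<close> of two connected sets, which cover the plane; the plane is
  unicoherent.\<close>
lemma annulus_region_connected:
  fixes c1 c2 :: "real \<Rightarrow> complex"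
  assumes "jordan_curve c1" "jordan_curve c2" "path_image c1 \<subseteq> inside (path_image c2)"
  shows "connected ((path_image c2 \<union> inside (path_image c2)) - inside (path_image c1))"
proof -
  let ?P1 = "path_image c1" and ?P2 = "path_image c2"
  have "simple_path c1" "pathfinish c1 = pathstart c1" "simple_path c2" "pathfinish c2 = pathstart c2"
    using assms(1,2) by (auto simp: jordan_curve_def)
  note J1 = Jordan_inside_outside[OF this(1,2)] and J2 = Jordan_inside_outside[OF this(3,4)]
  have c2: "- outside ?P2 = closure (inside ?P2)"
    using J2 by (simp add: closure_Un_frontier outside_inside sup_commute)
  have c1: "- inside ?P1 = closure (outside ?P1)"
    using J1 by (simp add: closure_Un_frontier inside_outside sup_commute)
  have "inside ?P1 \<subseteq> inside ?P2" by (rule inside_subset_inside_jordan[OF assms(2,3)])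
  then have "UNIV = - outside ?P2 \<union> - inside ?P1" using inside_Int_outside[of ?P2] by blast
  moreover have "closedin (top_of_set UNIV) (- outside ?P2)" "closedin (top_of_set UNIV) (- inside ?P1)"
    using J1 J2 by (simp_all add: closed_closedin[symmetric] closed_Compl)
  ultimately have "connected (- outside ?P2 \<inter> - inside ?P1)"
    using J1 J2 unfolding c1 c2
    by (intro unicoherentD[OF unicoherent_UNIV] connected_imp_connected_closure) auto
  then show ?thesis by (simp add: union_with_inside Diff_eq)
qed

lemma annulus_region_frontier:
  fixes c1 c2 :: "real \<Rightarrow> complex"
  assumes "jordan_curve c1" "jordan_curve c2" "path_image c1 \<subseteq> inside (path_image c2)"
  defines "R \<equiv> (path_image c2 \<union> inside (path_image c2)) - inside (path_image c1)"
  shows "frontier R = path_image c1 \<union> path_image c2"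
proof -
  let ?P1 = "path_image c1" and ?P2 = "path_image c2"
  have "simple_path c1" "pathfinish c1 = pathstart c1" "simple_path c2" "pathfinish c2 = pathstart c2"
    using assms(1,2) by (auto simp: jordan_curve_def)
  note J1 = Jordan_inside_outside[OF this(1,2)] and J2 = Jordan_inside_outside[OF this(3,4)]
  have nested: "inside ?P1 \<subseteq> inside ?P2" by (rule inside_subset_inside_jordan[OF assms(2,3)])
  have R: "R = - outside ?P2 \<inter> - inside ?P1" by (simp add: R_def union_with_inside Diff_eq)
  have "closed R" unfolding R using J1 J2 by (intro closed_Int closed_Compl) auto
  have P1R: "?P1 \<subseteq> R" using assms(3) inside_no_overlap[of ?P1] unfolding R_def by blast
  have P2R: "?P2 \<subseteq> R" using nested inside_no_overlap[of ?P2] unfolding R_def by blast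
  have "interior R \<inter> inside ?P1 = {}" "interior R \<inter> outside ?P2 = {}"
    using interior_subset[of R] unfolding R by blast+
  then have "interior R \<inter> closure (inside ?P1) = {}" "interior R \<inter> closure (outside ?P2) = {}"
    by (simp_all add: open_Int_closure_eq_empty)
  moreover have "?P1 \<subseteq> closure (inside ?P1)" "?P2 \<subseteq> closure (outside ?P2)"
    using J1 J2 by (auto simp: closure_Un_frontier)
  ultimately have "?P1 \<union> ?P2 \<subseteq> frontier R"
    using P1R P2R closure_subset[of R] by (auto simp: frontier_def)
  moreover have "frontier R \<subseteq> ?P1 \<union> ?P2"
  proof
    fix p assume p: "p \<in> frontier R"
    show "p \<in> ?P1 \<union> ?P2"
    proof (rule ccontr)
      assume "p \<notin> ?P1 \<union> ?P2"
      moreover have "p \<in> R" using p \<open>closed R\<close> frontier_subset_closed by blast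
      ultimately have "p \<in> inside ?P2 \<inter> outside ?P1"
        unfolding R using outside_inside[of ?P2] inside_outside[of ?P1] by blast
      moreover have "open (inside ?P2 \<inter> outside ?P1)" using J1 J2 by (intro open_Int) auto
      moreover have "inside ?P2 \<inter> outside ?P1 \<subseteq> R"
        unfolding R using inside_Int_outside[of ?P1] inside_Int_outside[of ?P2] by blast
      ultimately have "p \<in> interior R" using interior_maximal by blast
      then show False using p by (simp add: frontier_def)
    qed
  qed
  ultimately show ?thesis by blast
qed

text \<open>The inverse of the arc maps the curve onto a compact interval, so the curve would be a
  sub-arc or a point; neither has an inside, unlike a Jordan curve.\<close>
lemma jordan_curve_not_subset_arc:
  assumes "jordan_curve c" "arc g"
  shows "\<not> path_image c \<subseteq> path_image g"
proof
  assume sub: "path_image c \<subseteq> path_image g"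
  have sc: "simple_path c" "pathfinish c = pathstart c" using assms(1) by (auto simp: jordan_curve_def)
  have ins: "inside (path_image c) \<noteq> {}" using Jordan_inside_outside[OF sc] by blast
  obtain h where "homeomorphism {0..1} (path_image g) g h" using homeomorphism_arc[OF assms(2)] by blast
  then have hcont: "continuous_on (path_image g) h" and hg: "\<forall>y\<in>path_image g. g (h y) = y"
    and himg: "h ` path_image g = {0..1}"
    by (auto simp: homeomorphism_def)
  define K where "K = h ` path_image c"
  have "compact K" unfolding K_def
    by (rule compact_continuous_image[OF continuous_on_subset[OF hcont sub]])
       (rule compact_simple_path_image[OF sc(1)])
  moreover have "connected K" unfolding K_def
    by (rule connected_continuous_image[OF continuous_on_subset[OF hcont sub]])
       (simp add: connected_simple_path_image sc(1))
  ultimately obtain s t where st: "K = {s..t}" using connected_compact_interval_1 by blast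
  have K01: "K \<subseteq> {0..1}" unfolding K_def using himg sub by blast
  have PK: "path_image c = g ` K"
    unfolding K_def image_image using hg sub by (force simp: subset_iff image_iff)
  show False
  proof (cases "s < t")
    case True
    have "s \<in> {0..1}" "t \<in> {0..1}" using K01 st True by auto
    then have "arc (subpath s t g)" using arc_subpath_arc[OF assms(2)] True by simp
    moreover have "path_image (subpath s t g) = path_image c"
      using True PK st by (simp add: path_image_subpath)
    ultimately show False using inside_arc_empty ins by metis
  next
    case False
    then have "K = {} \<or> K = {s}" using st by auto
    then have "convex (path_image c)" using PK by auto
    then show False using inside_convex ins by blast
  qed
qed

lemma connected_subset_Union_closed:
  assumes "connected P" "P \<subseteq> \<Union>E" "finite E" "\<forall>e\<in>E. closed e"
    and "\<forall>e1\<in>E. \<forall>e2\<in>E. e1 \<noteq> e2 \<longrightarrow> e1 \<inter> e2 \<subseteq> V" "P \<inter> V = {}" "p \<in> P"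
  shows "\<exists>e\<in>E. P \<subseteq> e"
proof -
  obtain e0 where e0: "e0 \<in> E" "p \<in> e0" using assms(2,7) by blast
  define B where "B = \<Union>(E - {e0})"
  have "closed B" unfolding B_def using assms(3,4) by (intro closed_Union) auto
  moreover have cover: "P \<subseteq> e0 \<union> B" using assms(2) unfolding B_def by blast
  moreover have "e0 \<inter> B \<inter> P = {}" using assms(5,6) e0(1) unfolding B_def by blast
  moreover have "e0 \<inter> P \<noteq> {}" using e0 assms(7) by blast
  ultimately have "B \<inter> P = {}"
    using assms(1,4) e0(1) unfolding connected_closed by blast
  then show ?thesis using cover e0(1) by blast
qed

lemma connected_component_Un_closed_disjoint:
  assumes "closed S" "closed T" "S \<inter> T = {}" "u \<in> S" "w \<in> T"
  shows "w \<notin> connected_component_set (S \<union> T) u"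
proof -
  let ?C = "connected_component_set (S \<union> T) u"
  have "connected ?C" "?C \<subseteq> S \<union> T" "u \<in> ?C"
    using assms(4) by (auto simp: connected_component_subset)
  then have "T \<inter> ?C = {}" using assms(1-4) unfolding connected_closed by blast
  with assms(5) show ?thesis by blast
qed

lemma jordan_curve_in_frontier_meets_verts:
  assumes tri: "triangulated_complex G" and fin: "finite (edges G)" "finite (faces G)"
    and c: "jordan_curve c" "path_image c \<subseteq> frontier (\<Union>(faces G))"
  shows "path_image c \<inter> verts G \<noteq> {}"
proof
  assume PV: "path_image c \<inter> verts G = {}"
  have "closure (\<Union>(faces G)) = \<Union>(faces G)" using region_closed[OF tri fin(2)] by simp
  then have "frontier (\<Union>(faces G)) \<subseteq> \<Union>(edges G)"
    unfolding frontier_def using noninterior_point_on_edge[OF tri] by blast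
  with c(2) have sub: "path_image c \<subseteq> \<Union>(edges G)" by (rule order_trans)
  have conn: "connected (path_image c)"
    using c(1) by (simp add: jordan_curve_def connected_simple_path_image)
  have "\<exists>e\<in>edges G. path_image c \<subseteq> e"
  proof (rule connected_subset_Union_closed[OF conn sub fin(1) _ _ PV pathstart_in_path_image])
    show "\<forall>e\<in>edges G. closed e" using edge_closed[OF tri] by blast
    show "\<forall>e1\<in>edges G. \<forall>e2\<in>edges G. e1 \<noteq> e2 \<longrightarrow> e1 \<inter> e2 \<subseteq> verts G"
      using edges_meet_in_verts[OF tri] by blast
  qed
  then obtain e g where "arc g" "path_image g = e" "path_image c \<subseteq> e"
    using edge_is_arc[OF tri] by blast
  then show False using jordan_curve_not_subset_arc[OF c(1)] by blast
qed

lemma comb_annulus_connecting_path: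
  assumes "comb_annulus A"
  shows "connecting_paths A \<noteq> {}"
proof -
  from assms have tri: "triangulated_complex A" and fin: "finite (edges A)" "finite (faces A)"
    by (auto simp: comb_annulus_def)
  from assms obtain c1 c2 where jc: "jordan_curve c1" "jordan_curve c2"
    and nested: "path_image c1 \<subseteq> inside (path_image c2)"
    and R: "\<Union>(faces A) = (path_image c2 \<union> inside (path_image c2)) - inside (path_image c1)"
    by (auto simp: comb_annulus_def)
  let ?P1 = "path_image c1" and ?P2 = "path_image c2"
  have fr: "frontier (\<Union>(faces A)) = ?P1 \<union> ?P2"
    unfolding R by (rule annulus_region_frontier[OF jc nested])
  obtain u where u: "u \<in> ?P1" "u \<in> verts A"
    using jordan_curve_in_frontier_meets_verts[OF tri fin jc(1)] fr by blast
  obtain w where w: "w \<in> ?P2" "w \<in> verts A"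
    using jordan_curve_in_frontier_meets_verts[OF tri fin jc(2)] fr by blast
  have "connected (\<Union>(faces A))" unfolding R by (rule annulus_region_connected[OF jc nested])
  then obtain es where "walk A u es w" using walk_between_vertices[OF tri fin(2) _ u(2) w(2)] by blast
  then obtain vs where vs: "edge_path A vs es" "hd vs = u" "last vs = w"
    by (auto simp: walk_iff_edge_path)
  have "?P1 \<inter> ?P2 = {}" using nested inside_no_overlap[of ?P2] by blast
  then have sep: "closed ?P1" "closed ?P2" "?P1 \<inter> ?P2 = {}"
    using jc by (auto simp: jordan_curve_def intro: closed_simple_path_image)
  define C1 where "C1 = connected_component_set (frontier (\<Union>(faces A))) u"
  define C2 where "C2 = connected_component_set (frontier (\<Union>(faces A))) w"
  have "w \<notin> C1"
    unfolding C1_def fr using sep u(1) w(1) by (rule connected_component_Un_closed_disjoint)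
  moreover have "u \<in> C1" "w \<in> C2" "C1 \<in> bdry_comps A" "C2 \<in> bdry_comps A"
    using u(1) w(1) unfolding C1_def C2_def bdry_comps_def fr by (auto simp: components_iff)
  ultimately have "(vs, es) \<in> connecting_paths A"
    unfolding connecting_paths_def using vs by blast
  then show ?thesis by blast
qed

theorem mainTheorem4:
  fixes A rA :: planar_complex and b :: nat
  assumes "comb_annulus A"
    and "comb_annulus rA"
    and "refinement A rA"
    and "weakly_bounded b A rA"
  shows "EEL rA \<le> (real b)\<^sup>2 * EEL A"
proof -
  have cp: "connecting_paths A \<noteq> {}" by (rule comb_annulus_connecting_path[OF assms(1)])
  have finA: "finite (edges A)" using assms(1) by (simp add: comb_annulus_def)
  have "EEL rA \<le> real b * EEL A"
    using assms cp by (intro EEL_refinement_le) (auto simp: comb_annulus_def)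
  also have "\<dots> \<le> (real b)\<^sup>2 * EEL A"
  proof (rule mult_right_mono)
    show "real b \<le> (real b)\<^sup>2" by (metis le_square of_nat_le_iff of_nat_mult power2_eq_square)
  qed (rule EEL_nonneg[OF finA cp])
  finally show ?thesis .
qed

end
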